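(* Let $r\geq2$ and let $F$ be an $r$-graph. Let $c,a>0$ be fixed constants such that $c\cdot n^a\leq\mathit{ex}(n,F)$, and suppose that $d=d(n)$ satisfies $d=\Omega(1)$ and $d=o(n^{a-1})$. Then any $F$-freeness tester in $r$-graphs must perform $\Omega(n^{1-1/a}d^{-1/a})$ queries, when restricted to input $r$-graphs on $n$ vertices of average degree $d\pm o(d)$.
   Context: $\mathit{ex}(n,F)$ is the maximum number of edges of an $F$-free $r$-graph on $n$ vertices ($F$-free: containing no subgraph isomorphic to $F$). Testing model (general $r$-graphs model): the input is an $r$-graph $G$ on $n$ vertices with $m$ edges, where for each vertex the incident edges are ordered. An algorithm accesses $G$ only through queries: a vertex-set query asks whether a given $r$-set of vertices is an edge; a neighbour query asks, for a vertex $v$ and integer $i$, for the $i$-th edge incident to $v$ (returned as the other $r-1$ vertices, or an error if $\deg(v)<i$). $G$ is $\varepsilon$-far from a property $\mathcal P$ if at least $\varepsilon m$ edges must be added or deleted to obtain an $r$-graph in $\mathcal P$. A tester for $\mathcal P$ is a (possibly randomized) algorithm given a distance parameter $\varepsilon$ and query access to $G$ that accepts with probability at least $2/3$ if $G\in\mathcal P$ and rejects with probability at least $2/3$ if $G$ is $\varepsilon$-far from $\mathcal P$. Its query complexity is the number of queries performed. *)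

theory Defs
  imports "HOL-Probability.Probability_Mass_Function" "HOL-Library.Landau_Symbols"
begin

definition rgraph_on :: "nat \<Rightarrow> nat set \<Rightarrow> nat set set \<Rightarrow> bool" where
  "rgraph_on r V E \<longleftrightarrow> finite V \<and> (\<forall>e\<in>E. e \<subseteq> V \<and> card e = r)"

definition contains_copy :: "nat \<Rightarrow> nat set set \<Rightarrow> nat set \<Rightarrow> nat set set \<Rightarrow> bool" where
  "contains_copy n E VF EF \<longleftrightarrow>
     (\<exists>f. inj_on f VF \<and> f ` VF \<subseteq> {..<n} \<and> (\<forall>e\<in>EF. f ` e \<in> E))"

definition F_free :: "nat \<Rightarrow> nat set \<Rightarrow> nat set set \<Rightarrow> nat set set \<Rightarrow> bool" where
  "F_free n VF EF E \<longleftrightarrow> \<not> contains_copy n E VF EF"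

definition ex :: "nat \<Rightarrow> nat set \<Rightarrow> nat set set \<Rightarrow> nat \<Rightarrow> nat" where
  "ex r VF EF n = Max {card E | E. rgraph_on r {..<n} E \<and> F_free n VF EF E}"

text \<open>An input is an edge set together with, for each vertex, the ordered list of its
  incident edges.\<close>
type_synonym input = "nat set set \<times> (nat \<Rightarrow> nat set list)"

definition valid_input :: "nat \<Rightarrow> nat \<Rightarrow> input \<Rightarrow> bool" where
  "valid_input r n G \<longleftrightarrow> rgraph_on r {..<n} (fst G) \<and>
     (\<forall>v<n. distinct (snd G v) \<and> set (snd G v) = {e \<in> fst G. v \<in> e}) \<and>
     (\<forall>v\<ge>n. snd G v = [])"

definition avg_deg :: "nat \<Rightarrow> nat \<Rightarrow> input \<Rightarrow> real" where
  "avg_deg r n G = real r * real (card (fst G)) / real n"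

datatype query = VQ "nat set" | NQ nat nat

datatype answer = Bool bool | Nbr "nat set option"

text \<open>Vertex-set query: is S an edge? Neighbour query (v,i): the i-th edge (1-based)
  incident to v, returned as the other r-1 vertices, or an error (None) if deg v < i.\<close>
fun ans :: "input \<Rightarrow> query \<Rightarrow> answer" where
  "ans G (VQ S) = Bool (S \<in> fst G)"
| "ans G (NQ v i) = Nbr (if 1 \<le> i \<and> i \<le> length (snd G v)
                         then Some (snd G v ! (i - 1) - {v}) else None)"

text \<open>A deterministic adaptive algorithm is a decision tree: it either halts with
  an output (True = accept) or asks a query and continues depending on the answer.\<close>
datatype dtree = Leaf bool | Ask query "answer \<Rightarrow> dtree"

primrec run :: "dtree \<Rightarrow> input \<Rightarrow> bool \<times> nat" where
  "run (Leaf b) G = (b, 0)"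
| "run (Ask q k) G = (let res = run (k (ans G q)) G in (fst res, Suc (snd res)))"

text \<open>A randomized algorithm is a probability distribution over decision trees.\<close>
type_synonym ralg = "dtree pmf"

definition accept_prob :: "ralg \<Rightarrow> input \<Rightarrow> real" where
  "accept_prob A G = measure_pmf.prob A {t. fst (run t G)}"

definition eps_far :: "nat \<Rightarrow> nat \<Rightarrow> nat set \<Rightarrow> nat set set \<Rightarrow> real \<Rightarrow> input \<Rightarrow> bool" where
  "eps_far r n VF EF \<epsilon> G \<longleftrightarrow>
     (\<forall>H. rgraph_on r {..<n} H \<and> F_free n VF EF H \<longrightarrow>
          real (card (fst G - H) + card (H - fst G)) \<ge> \<epsilon> * real (card (fst G)))"

definition is_tester :: "nat \<Rightarrow> nat \<Rightarrow> nat set \<Rightarrow> nat set set \<Rightarrow> (input \<Rightarrow> bool) \<Rightarrow> real \<Rightarrow> ralg \<Rightarrow> bool" where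
  "is_tester r n VF EF Cls \<epsilon> A \<longleftrightarrow>
     (\<forall>G. valid_input r n G \<and> Cls G \<longrightarrow>
        (F_free n VF EF (fst G) \<longrightarrow> accept_prob A G \<ge> 2/3) \<and>
        (eps_far r n VF EF \<epsilon> G \<longrightarrow> 1 - accept_prob A G \<ge> 2/3))"

definition query_bound :: "nat \<Rightarrow> nat \<Rightarrow> (input \<Rightarrow> bool) \<Rightarrow> ralg \<Rightarrow> nat \<Rightarrow> bool" where
  "query_bound r n Cls A q \<longleftrightarrow>
     (\<forall>G. valid_input r n G \<and> Cls G \<longrightarrow> (\<forall>t\<in>set_pmf A. snd (run t G) \<le> q))"

definition deg_class :: "nat \<Rightarrow> nat \<Rightarrow> real \<Rightarrow> real \<Rightarrow> input \<Rightarrow> bool" where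
  "deg_class r n d \<eta> G \<longleftrightarrow> (1 - \<eta>) * d \<le> avg_deg r n G \<and> avg_deg r n G \<le> (1 + \<eta>) * d"

end

theory Submission
  imports Defs "HOL-Real_Asymp.Real_Asymp"
begin

text \<open>
  Let m = s choose r be about d n / r and take k of order (m / c) powr (1/a), so that
  ex(k, F) \<ge> c k powr a \<ge> m. Split the n vertices into n div k blocks of k vertices and put
  into a single block either m edges of an F-free graph on k vertices, or the complete r-graph
  on s vertices, which is far from F-free because each of its card VF-subsets spans a copy of F.
  All these inputs have average degree about d. A decision tree making q queries behaves on an
  input living in one block as on the empty graph unless some query touches that block, so it
  separates the two inputs of at most q blocks. A tester separates each pair with probability
  at least 1/3, whence q \<ge> (n div k)/3, which is of order n powr (1 - 1/a) * d powr (-1/a).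
\<close>

section \<open>Locality of decision trees\<close>

text \<open>
  Each query is charged to one vertex: a vertex-set query S can only be answered positively
  by a graph having an edge through Min S.
\<close>
fun query_vertex :: "query \<Rightarrow> nat" where
  "query_vertex (VQ S) = Min S"
| "query_vertex (NQ v i) = v"

fun queried_vertices :: "nat \<Rightarrow> dtree \<Rightarrow> input \<Rightarrow> nat set" where
  "queried_vertices 0 t G = {}"
| "queried_vertices (Suc j) (Leaf b) G = {}"
| "queried_vertices (Suc j) (Ask Q k) G =
     insert (query_vertex Q) (queried_vertices j (k (ans G Q)) G)"

lemma finite_queried_vertices: "finite (queried_vertices j t G)"
  by (induction j t G rule: queried_vertices.induct) auto

lemma card_queried_vertices_le: "card (queried_vertices j t G) \<le> j"
  by (induction j t G rule: queried_vertices.induct)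
     (auto simp: card_insert_if finite_queried_vertices)

lemma run_eq_if_answers_agree:
  assumes agree: "\<And>Q. query_vertex Q \<notin> X \<Longrightarrow> ans G Q = ans G' Q"
  shows "queried_vertices j t G' \<inter> X = {} \<Longrightarrow> snd (run t G) \<le> j \<Longrightarrow> run t G = run t G'"
proof (induction t arbitrary: j)
  case (Leaf b)
  then show ?case by simp
next
  case (Ask Q k)
  then obtain j' where j: "j = Suc j'" by (cases j) (auto simp: Let_def)
  have same: "ans G Q = ans G' Q" using Ask.prems j agree by auto
  have "queried_vertices j' (k (ans G' Q)) G' \<inter> X = {}" using Ask.prems j by auto
  moreover have "snd (run (k (ans G' Q)) G) \<le> j'" using Ask.prems j same by (simp add: Let_def)
  ultimately have "run (k (ans G' Q)) G = run (k (ans G' Q)) G'" using Ask.IH by blast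
  then show ?case using same by (simp add: Let_def)
qed

definition empty_input :: input where
  "empty_input = ({}, \<lambda>v. [])"

lemma ans_eq_empty_input:
  assumes "valid_input r n G" "r \<ge> 1" "\<Union>(fst G) \<subseteq> X" "query_vertex Q \<notin> X"
  shows "ans G Q = ans empty_input Q"
proof (cases Q)
  case (VQ S)
  have "S \<notin> fst G"
  proof
    assume S: "S \<in> fst G"
    then have "card S > 0" using assms(1,2) by (auto simp: valid_input_def rgraph_on_def)
    then have "Min S \<in> S" by (intro Min_in) (auto intro: card_ge_0_finite)
    then show False using S assms(3,4) VQ by auto
  qed
  then show ?thesis using VQ by (simp add: empty_input_def)
next
  case (NQ v i)
  have "snd G v = []"
  proof (cases "v < n")
    case True
    then have "set (snd G v) = {e \<in> fst G. v \<in> e}" using assms(1) by (simp add: valid_input_def)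
    also have "\<dots> = {}" using assms(3,4) NQ by auto
    finally show ?thesis by simp
  next
    case False
    then show ?thesis using assms(1) by (simp add: valid_input_def)
  qed
  then show ?thesis using NQ by (simp add: empty_input_def)
qed

definition input_of :: "nat \<Rightarrow> nat set set \<Rightarrow> input" where
  "input_of n E =
     (E, \<lambda>v. if v < n then (SOME xs. set xs = {e \<in> E. v \<in> e} \<and> distinct xs) else [])"

lemma fst_input_of [simp]: "fst (input_of n E) = E"
  by (simp add: input_of_def)

lemma valid_input_of:
  assumes "rgraph_on r {..<n} E"
  shows "valid_input r n (input_of n E)"
proof -
  have "finite E"
    by (rule finite_subset[of E "Pow {..<n}"]) (use assms in \<open>auto simp: rgraph_on_def\<close>)
  then have "\<exists>xs. set xs = {e \<in> E. v \<in> e} \<and> distinct xs" for v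
    using finite_distinct_list[of "{e \<in> E. v \<in> e}"] by auto
  then have "set (SOME xs. set xs = {e \<in> E. v \<in> e} \<and> distinct xs) = {e \<in> E. v \<in> e} \<and>
      distinct (SOME xs. set xs = {e \<in> E. v \<in> e} \<and> distinct xs)" for v
    by (rule someI_ex)
  then show ?thesis using assms by (auto simp: valid_input_def input_of_def)
qed

lemma card_blocks_meeting_le:
  assumes "finite X" "disjoint_family_on B I"
  shows "card {j \<in> I. X \<inter> B j \<noteq> {}} \<le> card X"
proof -
  define J where "J = {j \<in> I. X \<inter> B j \<noteq> {}}"
  define pick where "pick j = (SOME x. x \<in> X \<inter> B j)" for j
  have pick: "pick j \<in> X \<inter> B j" if "j \<in> J" for j
  proof -
    have "\<exists>x. x \<in> X \<inter> B j" using that unfolding J_def by blast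
    then show ?thesis unfolding pick_def by (rule someI_ex)
  qed
  have "inj_on pick J"
  proof (rule inj_onI)
    fix i j assume "i \<in> J" "j \<in> J" "pick i = pick j"
    then have "B i \<inter> B j \<noteq> {}" using pick by (metis IntD2 disjoint_iff)
    then show "i = j" using assms(2) \<open>i \<in> J\<close> \<open>j \<in> J\<close> unfolding J_def disjoint_family_on_def by auto
  qed
  moreover have "pick ` J \<subseteq> X" using pick by auto
  ultimately have "card J \<le> card X" using card_inj_on_le assms(1) by blast
  then show ?thesis unfolding J_def .
qed

lemma sum_prob_le_of_count_le:
  fixes A :: "'a pmf" and D :: "nat \<Rightarrow> 'a set"
  assumes "\<And>t. t \<in> set_pmf A \<Longrightarrow> card {j \<in> {..<N}. t \<in> D j} \<le> B"
  shows "(\<Sum>j<N. measure_pmf.prob A (D j)) \<le> real B"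
proof -
  have "(\<Sum>j<N. measure_pmf.prob A (D j)) = (\<Sum>j<N. measure_pmf.expectation A (indicator (D j)))"
    by (simp add: integral_indicator)
  also have "\<dots> = measure_pmf.expectation A (\<lambda>t. \<Sum>j<N. indicator (D j) t)"
    by (rule Bochner_Integration.integral_sum[symmetric])
       (auto intro!: measure_pmf.integrable_const_bound[where B=1])
  also have "\<dots> \<le> real B"
  proof (rule measure_pmf.integral_le_const)
    show "integrable (measure_pmf A) (\<lambda>t. \<Sum>j<N. indicator (D j) t :: real)"
    proof (rule measure_pmf.integrable_const_bound[where B="real N"])
      have "card ({..<N} \<inter> {j. x \<in> D j}) \<le> N" for x
        by (metis card_lessThan card_mono finite_lessThan inf_le1)
      then show "AE x in measure_pmf A. norm (\<Sum>j<N. indicator (D j) x :: real) \<le> real N"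
        by (auto simp: indicator_def sum.If_cases)
    qed auto
    show "AE x in measure_pmf A. (\<Sum>j<N. indicator (D j) x) \<le> real B"
    proof (rule AE_pmfI)
      fix t assume t: "t \<in> set_pmf A"
      have "(\<Sum>j<N. indicator (D j) t :: real) = real (card {j \<in> {..<N}. t \<in> D j})"
        by (simp add: indicator_def sum.If_cases Int_def)
      then show "(\<Sum>j<N. indicator (D j) t) \<le> real B" using assms[OF t] by simp
    qed
  qed
  finally show ?thesis .
qed

text \<open>
  The hybrid argument: on inputs supported by a block that none of the first q queries
  touches, a decision tree behaves as on the empty input.
\<close>
lemma card_blocks_le_queries:
  fixes A :: ralg and G1 G2 :: "nat \<Rightarrow> input" and B :: "nat \<Rightarrow> nat set"
  assumes "r \<ge> 1" and disjoint: "disjoint_family_on B {..<N}"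
    and valid: "\<And>j. j < N \<Longrightarrow> valid_input r n (G1 j) \<and> valid_input r n (G2 j)"
    and inside: "\<And>j. j < N \<Longrightarrow> \<Union>(fst (G1 j)) \<subseteq> B j \<and> \<Union>(fst (G2 j)) \<subseteq> B j"
    and accept: "\<And>j. j < N \<Longrightarrow> accept_prob A (G1 j) \<ge> 2/3"
    and reject: "\<And>j. j < N \<Longrightarrow> 1 - accept_prob A (G2 j) \<ge> 2/3"
    and queries: "\<And>j t. j < N \<Longrightarrow> t \<in> set_pmf A \<Longrightarrow>
                     snd (run t (G1 j)) \<le> q \<and> snd (run t (G2 j)) \<le> q"
  shows "real N \<le> 3 * real q"
proof -
  define D where "D j = {t. fst (run t (G1 j)) \<noteq> fst (run t (G2 j))}" for j
  have run_empty: "run t G = run t empty_input"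
    if "valid_input r n G" "\<Union>(fst G) \<subseteq> B j" "queried_vertices q t empty_input \<inter> B j = {}"
      "snd (run t G) \<le> q" for t G j
    by (rule run_eq_if_answers_agree[OF ans_eq_empty_input[OF that(1) assms(1) that(2)] that(3,4)])
  have few: "card {j \<in> {..<N}. t \<in> D j} \<le> q" if t: "t \<in> set_pmf A" for t
  proof -
    have "queried_vertices q t empty_input \<inter> B j \<noteq> {}" if "j < N" "t \<in> D j" for j
    proof
      assume untouched: "queried_vertices q t empty_input \<inter> B j = {}"
      note facts = valid[OF \<open>j < N\<close>] inside[OF \<open>j < N\<close>] queries[OF \<open>j < N\<close> t]
      have "run t (G1 j) = run t empty_input" "run t (G2 j) = run t empty_input"
        using run_empty[OF _ _ untouched] facts by simp_all
      then show False using \<open>t \<in> D j\<close> unfolding D_def by simp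
    qed
    then have "{j \<in> {..<N}. t \<in> D j} \<subseteq> {j \<in> {..<N}. queried_vertices q t empty_input \<inter> B j \<noteq> {}}"
      by blast
    then have "card {j \<in> {..<N}. t \<in> D j}
        \<le> card {j \<in> {..<N}. queried_vertices q t empty_input \<inter> B j \<noteq> {}}"
      by (intro card_mono) auto
    also have "\<dots> \<le> card (queried_vertices q t empty_input)"
      by (rule card_blocks_meeting_le[OF finite_queried_vertices disjoint])
    also have "\<dots> \<le> q" by (rule card_queried_vertices_le)
    finally show ?thesis .
  qed
  have gap: "1/3 \<le> measure_pmf.prob A (D j)" if "j < N" for j
  proof -
    have "{t. fst (run t (G1 j))} \<subseteq> {t. fst (run t (G2 j))} \<union> D j" unfolding D_def by auto
    then have "accept_prob A (G1 j) \<le> measure_pmf.prob A ({t. fst (run t (G2 j))} \<union> D j)"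
      unfolding accept_prob_def by (rule measure_pmf.finite_measure_mono) simp
    also have "\<dots> \<le> accept_prob A (G2 j) + measure_pmf.prob A (D j)"
      unfolding accept_prob_def by (rule measure_subadditive) simp_all
    finally show ?thesis using accept[OF that] reject[OF that] by simp
  qed
  have "real N / 3 = (\<Sum>j<N. 1/3 :: real)" by simp
  also have "\<dots> \<le> (\<Sum>j<N. measure_pmf.prob A (D j))" using gap by (intro sum_mono) simp
  also have "\<dots> \<le> real q" by (rule sum_prob_le_of_count_le) (rule few)
  finally show ?thesis by linarith
qed

section \<open>F-free copies and complete graphs\<close>

lemma inj_on_extend:
  assumes "finite V" "W \<subseteq> V" "inj_on g W" "g ` W \<subseteq> Y" "finite Y" "card V \<le> card Y"
  obtains g' where "inj_on g' V" "g' ` V \<subseteq> Y" "\<And>x. x \<in> W \<Longrightarrow> g' x = g x"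
proof -
  have "card (V - W) = card V - card W"
    using assms(1,2) by (simp add: card_Diff_subset finite_subset)
  also have "\<dots> \<le> card Y - card (g ` W)"
    using assms(6) card_image[OF assms(3)] by simp
  also have "\<dots> = card (Y - g ` W)"
    using assms(4,5) by (simp add: card_Diff_subset finite_subset)
  finally obtain Z where Z: "Z \<subseteq> Y - g ` W" "card Z = card (V - W)"
    by (meson obtain_subset_with_card_n)
  have "finite Z" using Z(1) assms(5) finite_subset by blast
  then obtain \<sigma> where \<sigma>: "bij_betw \<sigma> (V - W) Z"
    using Z(2) assms(1) finite_same_card_bij by (metis finite_Diff)
  define g' where "g' x = (if x \<in> W then g x else \<sigma> x)" for x
  have "g' ` W = g ` W" "g' ` (V - W) = Z"
    using \<sigma> unfolding g'_def bij_betw_def by (auto simp: image_def)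
  moreover have "inj_on g' W" using assms(3) unfolding g'_def inj_on_def by simp
  moreover have "inj_on g' (V - W)" using \<sigma> unfolding g'_def bij_betw_def inj_on_def by simp
  ultimately have "inj_on g' (W \<union> (V - W))" using Z(1) by (subst inj_on_Un) auto
  moreover have "W \<union> (V - W) = V" using assms(2) by blast
  moreover have "g' ` V \<subseteq> Y"
    using \<open>g' ` W = g ` W\<close> \<open>g' ` (V - W) = Z\<close> assms(2,4) Z(1) by blast
  ultimately show ?thesis using that unfolding g'_def by simp
qed

text \<open>
  The vertices of F outside all edges may be sent anywhere by a copy, which is why the copy
  has to be repaired on them using card VF \<le> k.
\<close>
lemma contains_copy_of_image:
  assumes copy: "contains_copy n ((`) h ` E) VF EF" and h: "inj_on h {..<k}"
    and E: "\<Union>E \<subseteq> {..<k}" and F: "\<Union>EF \<subseteq> VF" "finite VF" "card VF \<le> k"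
  shows "contains_copy k E VF EF"
proof -
  obtain f where f: "inj_on f VF" and f_edges: "\<forall>e\<in>EF. f ` e \<in> (`) h ` E"
    using copy unfolding contains_copy_def by blast
  define W where "W = {x \<in> VF. f x \<in> h ` {..<k}}"
  define g where "g = inv_into {..<k} h \<circ> f"
  have "W \<subseteq> VF" "f ` W \<subseteq> h ` {..<k}" unfolding W_def by auto
  then have "inj_on g W"
    unfolding g_def by (intro comp_inj_on inj_on_subset[OF f] inj_on_inv_into)
  moreover have "g ` W \<subseteq> {..<k}"
    using \<open>f ` W \<subseteq> h ` {..<k}\<close> inv_into_into[of _ h "{..<k}"] unfolding g_def by auto
  moreover have "card VF \<le> card {..<k}" using F(3) by simp
  ultimately obtain g' where g': "inj_on g' VF" "g' ` VF \<subseteq> {..<k}" "\<And>x. x \<in> W \<Longrightarrow> g' x = g x"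
    using inj_on_extend[OF F(2) \<open>W \<subseteq> VF\<close>] by blast
  have "g' ` e \<in> E" if e: "e \<in> EF" for e
  proof -
    obtain e' where e': "e' \<in> E" "f ` e = h ` e'" using f_edges e by blast
    have "e' \<subseteq> {..<k}" using e'(1) E by blast
    have "e \<subseteq> W"
    proof
      fix x assume "x \<in> e"
      then have "x \<in> VF" "f x \<in> h ` e'" using e e'(2) F(1) by auto
      then show "x \<in> W" using \<open>e' \<subseteq> {..<k}\<close> unfolding W_def by auto
    qed
    then have "g' ` e = g ` e" using g'(3) by (intro image_cong) auto
    also have "\<dots> = inv_into {..<k} h ` f ` e" by (simp add: g_def image_comp)
    also have "\<dots> = e'" using e'(2) \<open>e' \<subseteq> {..<k}\<close> h by (simp add: inv_into_image_cancel)
    finally show ?thesis using e'(1) by simp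
  qed
  then show ?thesis using g' unfolding contains_copy_def by blast
qed

lemma rgraph_on_image:
  assumes "rgraph_on r V E" "inj_on h V" "h ` V \<subseteq> V'" "finite V'"
  shows "rgraph_on r V' ((`) h ` E)"
proof -
  have "card (h ` e) = r" if "e \<in> E" for e
    using that assms(1,2) unfolding rgraph_on_def by (metis card_image inj_on_subset)
  then show ?thesis using assms unfolding rgraph_on_def by blast
qed

definition complete_rgraph :: "nat \<Rightarrow> 'a set \<Rightarrow> 'a set set" where
  "complete_rgraph r T = {e. e \<subseteq> T \<and> card e = r}"

lemma card_complete_rgraph: "finite T \<Longrightarrow> card (complete_rgraph r T) = card T choose r"
  unfolding complete_rgraph_def by (rule n_subsets)

lemma rgraph_on_complete_rgraph: "finite V \<Longrightarrow> T \<subseteq> V \<Longrightarrow> rgraph_on r V (complete_rgraph r T)"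
  unfolding rgraph_on_def complete_rgraph_def by blast

lemma card_le_choose_if_rgraph_on: "rgraph_on r V E \<Longrightarrow> card E \<le> card V choose r"
  using card_mono[of "complete_rgraph r V" E] card_complete_rgraph[of V r]
  unfolding rgraph_on_def complete_rgraph_def by (auto intro: finite_subset)

lemma card_supersets:
  assumes "finite T" "e \<subseteq> T" "card e = r" "r \<le> v"
  shows "card {S. S \<subseteq> T \<and> card S = v \<and> e \<subseteq> S} = (card T - r) choose (v - r)"
proof -
  have fe: "finite e" using assms(1,2) finite_subset by blast
  have "bij_betw (\<lambda>S. S - e) {S. S \<subseteq> T \<and> card S = v \<and> e \<subseteq> S} (complete_rgraph (v - r) (T - e))"
  proof (rule bij_betw_byWitness[where f'="\<lambda>U. U \<union> e"])
    show "(\<lambda>S. S - e) ` {S. S \<subseteq> T \<and> card S = v \<and> e \<subseteq> S} \<subseteq> complete_rgraph (v - r) (T - e)"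
      using assms(1,3) fe by (auto simp: complete_rgraph_def card_Diff_subset finite_subset)
    show "(\<lambda>U. U \<union> e) ` complete_rgraph (v - r) (T - e) \<subseteq> {S. S \<subseteq> T \<and> card S = v \<and> e \<subseteq> S}"
    proof
      fix S assume "S \<in> (\<lambda>U. U \<union> e) ` complete_rgraph (v - r) (T - e)"
      then obtain U where U: "U \<subseteq> T - e" "card U = v - r" "S = U \<union> e"
        by (auto simp: complete_rgraph_def)
      have "finite U" using U(1) assms(1) finite_subset by blast
      then have "card S = card U + card e"
        unfolding U(3) using U(1) fe by (intro card_Un_disjoint) auto
      then show "S \<in> {S. S \<subseteq> T \<and> card S = v \<and> e \<subseteq> S}" using U assms(2-4) by auto
    qed
  qed (auto simp: complete_rgraph_def)
  then have "card {S. S \<subseteq> T \<and> card S = v \<and> e \<subseteq> S} = card (T - e) choose (v - r)"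
    using assms(1) by (simp add: bij_betw_same_card card_complete_rgraph)
  also have "card (T - e) = card T - r" using assms fe card_Diff_subset by auto
  finally show ?thesis .
qed

lemma rank_le_card_vertices:
  assumes "rgraph_on r VF EF" "EF \<noteq> {}"
  shows "r \<le> card VF"
proof -
  obtain e where "e \<in> EF" using assms(2) by blast
  then show ?thesis using assms(1) unfolding rgraph_on_def by (metis card_mono)
qed

text \<open>Double counting the pairs (e, S) with e \<in> M, e \<subseteq> S, S a v-subset of T.\<close>
lemma choose_le_card_mult_if_hits:
  assumes "finite T" "M \<subseteq> complete_rgraph r T" "r \<le> v"
    and hits: "\<And>S. S \<subseteq> T \<Longrightarrow> card S = v \<Longrightarrow> \<exists>e\<in>M. e \<subseteq> S"
  shows "card T choose v \<le> card M * ((card T - r) choose (v - r))"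
proof -
  define Sv where "Sv = complete_rgraph v T"
  have fin: "finite Sv" "finite M"
    using assms(1,2) unfolding Sv_def complete_rgraph_def
    by (auto intro: finite_subset[of _ "Pow T"])
  have "card T choose v = (\<Sum>S\<in>Sv. 1)" using assms(1) by (simp add: Sv_def card_complete_rgraph)
  also have "\<dots> \<le> (\<Sum>S\<in>Sv. card {e \<in> M. e \<subseteq> S})"
  proof (rule sum_mono)
    fix S assume "S \<in> Sv"
    then have "{e \<in> M. e \<subseteq> S} \<noteq> {}" using hits unfolding Sv_def complete_rgraph_def by blast
    then show "1 \<le> card {e \<in> M. e \<subseteq> S}" using fin(2) by (simp add: Suc_le_eq card_gt_0_iff)
  qed
  also have "\<dots> = (\<Sum>e\<in>M. card {S \<in> Sv. e \<subseteq> S})"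
    using sum.swap_restrict[OF fin, of "\<lambda>_ _. 1::nat" "\<lambda>S e. e \<subseteq> S"] by simp
  also have "\<dots> = (\<Sum>e\<in>M. (card T - r) choose (v - r))"
  proof (rule sum.cong[OF refl])
    fix e assume "e \<in> M"
    then have "e \<subseteq> T" "card e = r" using assms(2) unfolding complete_rgraph_def by auto
    moreover have "{S \<in> Sv. e \<subseteq> S} = {S. S \<subseteq> T \<and> card S = v \<and> e \<subseteq> S}"
      unfolding Sv_def complete_rgraph_def by auto
    ultimately show "card {S \<in> Sv. e \<subseteq> S} = (card T - r) choose (v - r)"
      using card_supersets assms(1,3) by simp
  qed
  finally show ?thesis by simp
qed

text \<open>
  Every card VF-subset of T carries a copy of F in the complete graph, so an F-free H misses
  one of its edges; the double count turns this into a fraction 1/(card VF choose r) of all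
  edges of the complete graph.
\<close>
lemma eps_far_complete_rgraph:
  assumes F: "rgraph_on r VF EF" "EF \<noteq> {}"
    and T: "finite T" "T \<subseteq> {..<n}" "card VF \<le> card T"
  shows "eps_far r n VF EF (1 / real (card VF choose r)) (input_of n (complete_rgraph r T))"
  unfolding eps_far_def fst_input_of
proof (intro allI impI)
  fix H assume H: "rgraph_on r {..<n} H \<and> F_free n VF EF H"
  define v where "v = card VF"
  define M where "M = complete_rgraph r T - H"
  have "finite VF" using F(1) by (simp add: rgraph_on_def)
  have "r \<le> v" unfolding v_def by (rule rank_le_card_vertices[OF F])
  have hits: "\<exists>e\<in>M. e \<subseteq> S" if S: "S \<subseteq> T" "card S = v" for S
  proof -
    have "finite S" using S(1) T(1) finite_subset by blast
    then obtain f where f: "bij_betw f VF S"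
      using finite_same_card_bij[OF \<open>finite VF\<close>] S(2) unfolding v_def by metis
    then have "inj_on f VF" "f ` VF \<subseteq> {..<n}" using S(1) T(2) unfolding bij_betw_def by auto
    then obtain e where e: "e \<in> EF" "f ` e \<notin> H"
      using H unfolding F_free_def contains_copy_def by blast
    then have "e \<subseteq> VF" "card e = r" using F(1) by (auto simp: rgraph_on_def)
    then have "f ` e \<subseteq> S" "card (f ` e) = r"
      using f \<open>inj_on f VF\<close> by (auto simp: bij_betw_def card_image inj_on_subset)
    then show ?thesis using e(2) S(1) unfolding M_def complete_rgraph_def by blast
  qed
  have "card T choose v \<le> card M * ((card T - r) choose (v - r))"
    using choose_le_card_mult_if_hits[OF T(1) _ \<open>r \<le> v\<close> hits] unfolding M_def by blast
  then have "(card T choose r) * ((card T - r) choose (v - r))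
      \<le> card M * (v choose r) * ((card T - r) choose (v - r))"
    using choose_mult[OF \<open>r \<le> v\<close>, of "card T"] T(3) unfolding v_def
    by (metis mult.commute mult.left_commute mult_le_mono2)
  moreover have "(card T - r) choose (v - r) > 0" using \<open>r \<le> v\<close> T(3) unfolding v_def by simp
  ultimately have "card T choose r \<le> card M * (v choose r)" by simp
  moreover have "v choose r > 0" using \<open>r \<le> v\<close> by simp
  ultimately have "real (card T choose r) / real (v choose r) \<le> real (card M)"
    by (simp add: divide_le_eq flip: of_nat_mult)
  then show "1 / real (card VF choose r) * real (card (complete_rgraph r T))
      \<le> real (card (complete_rgraph r T - H) + card (H - complete_rgraph r T))"
    using T(1) unfolding M_def v_def by (simp add: card_complete_rgraph)
qed

lemma ex_attained:
  assumes "EF \<noteq> {}"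
  obtains E where "rgraph_on r {..<k} E" "F_free k VF EF E" "card E = ex r VF EF k"
proof -
  let ?S = "{card E | E. rgraph_on r {..<k} E \<and> F_free k VF EF E}"
  have "finite {E. rgraph_on r {..<k} E \<and> F_free k VF EF E}"
    by (rule finite_subset[of _ "Pow (Pow {..<k})"]) (auto simp: rgraph_on_def)
  then have "finite ?S" by (rule finite_image_set)
  moreover have "rgraph_on r {..<k} {}" "F_free k VF EF {}"
    using assms by (auto simp: rgraph_on_def F_free_def contains_copy_def)
  then have "?S \<noteq> {}" by blast
  ultimately have "ex r VF EF k \<in> ?S" unfolding ex_def by (rule Max_in)
  then show ?thesis using that by auto
qed

lemma F_free_mono: "F_free n VF EF E \<Longrightarrow> E' \<subseteq> E \<Longrightarrow> F_free n VF EF E'"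
  unfolding F_free_def contains_copy_def by blast

lemma le_if_choose_le:
  assumes "1 \<le> r" "r \<le> s" "s choose r \<le> k choose r"
  shows "s \<le> k"
proof (rule ccontr)
  assume "\<not> s \<le> k"
  then have "Suc k choose r \<le> s choose r" by (intro binomial_right_mono) simp
  moreover obtain r' where "r = Suc r'" using assms(1) by (cases r) auto
  moreover have "0 < s choose r" using assms(2) by simp
  ultimately show False
  proof (cases "r' \<le> k")
    case True
    then have "0 < k choose r'" by simp
    moreover have "Suc k choose r = (k choose r') + (k choose r)" using \<open>r = Suc r'\<close> by simp
    ultimately show False using assms(3) \<open>Suc k choose r \<le> s choose r\<close> by linarith
  next
    case False
    then have "k choose r = 0" using \<open>r = Suc r'\<close> by simp
    then show False using assms(3) \<open>0 < s choose r\<close> by (simp add: binomial_eq_0)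
  qed
qed

section \<open>The lower bound for fixed n\<close>

lemma tester_queries_ge_blocks:
  fixes A :: ralg
  assumes r: "r \<ge> 2" and F: "rgraph_on r VF EF" "EF \<noteq> {}"
    and s: "card VF \<le> s" "s choose r \<le> ex r VF EF k"
    and Cls: "\<And>G. valid_input r n G \<Longrightarrow> card (fst G) = s choose r \<Longrightarrow> Cls G"
    and tester: "is_tester r n VF EF Cls (1 / real (card VF choose r)) A"
    and bound: "query_bound r n Cls A q"
  shows "real (n div k) \<le> 3 * real q"
proof -
  have VF: "finite VF" "\<Union>EF \<subseteq> VF" using F(1) by (auto simp: rgraph_on_def)
  have "r \<le> s" using rank_le_card_vertices[OF F] s(1) by simp
  obtain E0 where E0: "rgraph_on r {..<k} E0" "F_free k VF EF E0" "card E0 = ex r VF EF k"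
    using ex_attained[OF F(2)] by blast
  obtain E where E: "E \<subseteq> E0" "card E = s choose r"
    using s(2) E0(3) by (metis obtain_subset_with_card_n)
  have E_rgraph: "rgraph_on r {..<k} E" using E0(1) E(1) by (auto simp: rgraph_on_def)
  have E_free: "F_free k VF EF E" using F_free_mono[OF E0(2) E(1)] .
  have "s choose r \<le> k choose r"
    using s(2) card_le_choose_if_rgraph_on[OF E0(1)] E0(3) by simp
  then have "s \<le> k" using le_if_choose_le[of r s k] \<open>r \<le> s\<close> r by simp
  define shift where "shift j x = x + j * k" for j x
  define block where "block j = {x. x div k = j}" for j
  define G1 where "G1 j = input_of n ((`) (shift j) ` E)" for j
  define G2 where "G2 j = input_of n (complete_rgraph r (shift j ` {..<s}))" for j
  have inj: "inj (shift j)" for j unfolding shift_def by (rule injI) simp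
  have in_block: "shift j ` {..<k} \<subseteq> {..<n} \<inter> block j" if "j < n div k" for j
  proof
    fix y assume "y \<in> shift j ` {..<k}"
    then obtain x where "x < k" "y = x + j * k" unfolding shift_def by blast
    moreover have "Suc j * k \<le> n"
      using that by (metis div_times_less_eq_dividend less_eq_Suc_le mult_le_mono1 order_trans)
    ultimately show "y \<in> {..<n} \<inter> block j" unfolding block_def by auto
  qed
  have E_in: "\<Union>E \<subseteq> {..<k}" using E_rgraph by (auto simp: rgraph_on_def)
  have G1: "valid_input r n (G1 j) \<and> card (fst (G1 j)) = s choose r \<and>
      F_free n VF EF (fst (G1 j)) \<and> \<Union>(fst (G1 j)) \<subseteq> block j" if "j < n div k" for j
  proof (intro conjI)
    show "valid_input r n (G1 j)" unfolding G1_def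
      using rgraph_on_image[OF E_rgraph inj_on_subset[OF inj subset_UNIV]] in_block[OF that]
      by (intro valid_input_of) blast
    show "card (fst (G1 j)) = s choose r" unfolding G1_def fst_input_of
      using card_image[OF inj_on_image[OF inj_on_subset[OF inj subset_UNIV]]] E(2) by simp
    show "F_free n VF EF (fst (G1 j))"
      using contains_copy_of_image[OF _ inj_on_subset[OF inj subset_UNIV] E_in VF(2,1)]
        E_free s(1) \<open>s \<le> k\<close>
      unfolding G1_def fst_input_of F_free_def by auto
    show "\<Union>(fst (G1 j)) \<subseteq> block j" unfolding G1_def fst_input_of
      using E_in in_block[OF that] by blast
  qed
  have G2: "valid_input r n (G2 j) \<and> card (fst (G2 j)) = s choose r \<and>
      eps_far r n VF EF (1 / real (card VF choose r)) (G2 j) \<and> \<Union>(fst (G2 j)) \<subseteq> block j"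
    if "j < n div k" for j
  proof -
    let ?T = "shift j ` {..<s}"
    have "?T \<subseteq> shift j ` {..<k}" using \<open>s \<le> k\<close> by (intro image_mono) auto
    then have T: "?T \<subseteq> {..<n} \<inter> block j" using in_block[OF that] by blast
    have "card ?T = s" using card_image[OF inj_on_subset[OF inj subset_UNIV]] by simp
    have "valid_input r n (G2 j)"
      unfolding G2_def using T by (intro valid_input_of rgraph_on_complete_rgraph) auto
    moreover have "card (fst (G2 j)) = s choose r"
      using \<open>card ?T = s\<close> by (simp add: G2_def card_complete_rgraph)
    moreover have "eps_far r n VF EF (1 / real (card VF choose r)) (G2 j)"
      unfolding G2_def using T s(1) \<open>card ?T = s\<close> by (intro eps_far_complete_rgraph[OF F]) auto
    moreover have "\<Union>(fst (G2 j)) \<subseteq> block j"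
      using T unfolding G2_def complete_rgraph_def by auto
    ultimately show ?thesis by blast
  qed
  have tests: "(F_free n VF EF (fst G) \<longrightarrow> accept_prob A G \<ge> 2/3) \<and>
      (eps_far r n VF EF (1 / real (card VF choose r)) G \<longrightarrow> 1 - accept_prob A G \<ge> 2/3)"
    if "valid_input r n G" "card (fst G) = s choose r" for G
    using tester that Cls[OF that] unfolding is_tester_def by (elim allE[of _ G]) simp
  have queries: "snd (run t G) \<le> q" if "valid_input r n G" "card (fst G) = s choose r"
    "t \<in> set_pmf A" for G t
    using bound that Cls[OF that(1,2)] unfolding query_bound_def by (elim allE[of _ G]) simp
  show ?thesis
  proof (rule card_blocks_le_queries[of r block "n div k" n G1 G2 A q])
    show "disjoint_family_on block {..<n div k}" unfolding disjoint_family_on_def block_def by auto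
    fix j assume j: "j < n div k"
    show "valid_input r n (G1 j) \<and> valid_input r n (G2 j)" using G1[OF j] G2[OF j] by blast
    show "\<Union>(fst (G1 j)) \<subseteq> block j \<and> \<Union>(fst (G2 j)) \<subseteq> block j" using G1[OF j] G2[OF j] by blast
    show "accept_prob A (G1 j) \<ge> 2/3" "1 - accept_prob A (G2 j) \<ge> 2/3"
      using tests G1[OF j] G2[OF j] by simp_all
    show "snd (run t (G1 j)) \<le> q \<and> snd (run t (G2 j)) \<le> q" if "t \<in> set_pmf A" for t
      using queries G1[OF j] G2[OF j] that by simp
  qed (use r in simp)
qed

lemma le_mult_binomial:
  assumes "1 \<le> r" "r \<le> s"
  shows "real s \<le> real r * real (s choose r)"
proof -
  have "1 \<le> real s / real r" using assms by simp
  then have "real s / real r \<le> (real s / real r) ^ r"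
    using power_increasing[OF assms(1), of "real s / real r"] by simp
  also have "\<dots> \<le> real (s choose r)" using binomial_ge_n_over_k_pow_k[OF assms(2)] by simp
  finally show ?thesis using assms(1) by (simp add: divide_le_eq mult.commute)
qed

definition choose_floor :: "nat \<Rightarrow> real \<Rightarrow> nat" where
  "choose_floor r x = (GREATEST s. real (s choose r) \<le> x)"

lemma choose_floor_bounded:
  assumes "1 \<le> r" "real (s choose r) \<le> x"
  shows "s \<le> r + nat \<lceil>real r * x\<rceil>"
proof (cases "s \<le> r")
  case False
  then have "real s \<le> real r * real (s choose r)" using le_mult_binomial assms(1) by simp
  also have "\<dots> \<le> real r * x" using assms(2) by (intro mult_left_mono) auto
  finally show ?thesis by linarith
qed simp

lemma le_choose_floor:
  assumes "1 \<le> r" "real (s choose r) \<le> x"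
  shows "s \<le> choose_floor r x"
  unfolding choose_floor_def
  by (rule Greatest_le_nat[where P="\<lambda>s. real (s choose r) \<le> x", OF assms(2)])
     (rule choose_floor_bounded[OF assms(1)])

lemma choose_floor_le:
  assumes "1 \<le> r" "0 \<le> x"
  shows "real (choose_floor r x choose r) \<le> x"
proof -
  have "real (0 choose r) \<le> x" using assms by (cases r) auto
  then show ?thesis
    unfolding choose_floor_def
    by (rule GreatestI_nat[where P="\<lambda>s. real (s choose r) \<le> x"])
       (rule choose_floor_bounded[OF assms(1)])
qed

lemma less_choose_Suc_choose_floor:
  assumes "1 \<le> r"
  shows "x < real (Suc (choose_floor r x) choose r)"
  using le_choose_floor[OF assms, of "Suc (choose_floor r x)" x] by linarith

lemma filterlim_choose_floor_at_top:
  assumes "1 \<le> r"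
  shows "filterlim (choose_floor r) at_top at_top"
  unfolding filterlim_at_top
proof
  fix S :: nat
  show "\<forall>\<^sub>F x in at_top. S \<le> choose_floor r x"
    using eventually_ge_at_top[of "real (S choose r)"]
    by eventually_elim (rule le_choose_floor[OF assms])
qed

lemma choose_Suc_ratio:
  assumes "r \<le> Suc s"
  shows "real (s choose r) / real (Suc s choose r) = 1 - real r / (1 + real s)"
proof -
  have "real (Suc s - r) * real (Suc s choose r) = (1 + real s) * real (s choose r)"
    using binomial_absorb_comp[of "Suc s" r] by (metis diff_Suc_1 of_nat_Suc of_nat_mult)
  moreover have "real (Suc s - r) = 1 + real s - real r" using assms by simp
  moreover have "real (Suc s choose r) > 0" using assms by simp
  ultimately show ?thesis by (simp add: field_simps)
qed

lemma choose_floor_ratio_tendsto: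
  assumes "1 \<le> r"
  shows "((\<lambda>x. real (choose_floor r x choose r) / x) \<longlongrightarrow> 1) at_top"
proof (rule tendsto_sandwich)
  have "filterlim (\<lambda>x. 1 + real (choose_floor r x)) at_top at_top"
    using filterlim_compose[OF filterlim_real_sequentially filterlim_choose_floor_at_top[OF assms]]
    by (rule filterlim_tendsto_add_at_top[OF tendsto_const])
  then have "((\<lambda>x. real r / (1 + real (choose_floor r x))) \<longlongrightarrow> 0) at_top"
    by (rule tendsto_divide_0[OF tendsto_const filterlim_at_top_imp_at_infinity])
  then show "((\<lambda>x. 1 - real r / (1 + real (choose_floor r x))) \<longlongrightarrow> 1) at_top"
    using tendsto_diff[OF tendsto_const[of 1]] by fastforce
  show "\<forall>\<^sub>F x in at_top. 1 - real r / (1 + real (choose_floor r x))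
      \<le> real (choose_floor r x choose r) / x"
    using eventually_gt_at_top[of 0]
  proof eventually_elim
    case (elim x)
    let ?s = "choose_floor r x"
    have below: "x < real (Suc ?s choose r)" by (rule less_choose_Suc_choose_floor[OF assms])
    then have "r \<le> Suc ?s" using elim by (cases "r \<le> Suc ?s") (auto simp: binomial_eq_0)
    then have "1 - real r / (1 + real ?s) = real (?s choose r) / real (Suc ?s choose r)"
      by (simp add: choose_Suc_ratio)
    also have "\<dots> \<le> real (?s choose r) / x"
      using elim below \<open>r \<le> Suc ?s\<close> by (intro divide_left_mono mult_pos_pos) auto
    finally show ?case .
  qed
  show "\<forall>\<^sub>F x in at_top. real (choose_floor r x choose r) / x \<le> 1"
    using eventually_gt_at_top[of 0] by eventually_elim (simp add: choose_floor_le[OF assms])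
qed simp

lemma filterlim_nat_ceiling_at_top:
  fixes f :: "'a \<Rightarrow> real"
  assumes "filterlim f at_top F"
  shows "filterlim (\<lambda>z. nat \<lceil>f z\<rceil>) at_top F"
  unfolding filterlim_at_top
proof
  fix Z :: nat
  show "\<forall>\<^sub>F z in F. Z \<le> nat \<lceil>f z\<rceil>"
    using assms[unfolded filterlim_at_top, rule_format, of "real Z"] by eventually_elim linarith
qed

lemma filterlim_mult_real_at_top:
  fixes d :: "nat \<Rightarrow> real"
  assumes "c' > 0" "b > 0" "\<forall>\<^sub>F n in sequentially. c' \<le> d n"
  shows "filterlim (\<lambda>n. d n * real n / b) at_top sequentially"
proof (rule filterlim_at_top_mono)
  show "filterlim (\<lambda>n. c' / b * real n) at_top sequentially"
    using assms(1,2)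
    by (intro filterlim_tendsto_pos_mult_at_top[OF tendsto_const] filterlim_real_sequentially) simp
  show "\<forall>\<^sub>F n in sequentially. c' / b * real n \<le> d n * real n / b"
    using assms(3)
  proof eventually_elim
    case (elim n)
    then have "c' * real n \<le> d n * real n" by (simp add: mult_right_mono)
    then show ?case using assms(2) by (simp add: divide_right_mono)
  qed
qed

lemma filterlim_root_ratio_at_top:
  fixes d :: "nat \<Rightarrow> real"
  assumes "a > 0" "\<forall>\<^sub>F n in sequentially. d n > 0" "d \<in> o(\<lambda>n. real n powr (a - 1))"
  shows "filterlim (\<lambda>n. real n powr (1 - 1 / a) * d n powr (- 1 / a)) at_top sequentially"
proof -
  have "\<forall>\<^sub>F n in sequentially. 0 < d n / real n powr (a - 1)"
    using assms(2) eventually_gt_at_top[of 0] by eventually_elim simp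
  then have "filterlim (\<lambda>n. inverse (d n / real n powr (a - 1))) at_top sequentially"
    by (rule filterlim_inverse_at_top[OF smalloD_tendsto[OF assms(3)]])
  then have "filterlim (\<lambda>n. inverse (d n / real n powr (a - 1)) powr (1 / a)) at_top sequentially"
    using assms(1) by (intro filterlim_compose[OF real_powr_at_top]) simp
  moreover have "\<forall>\<^sub>F n in sequentially. inverse (d n / real n powr (a - 1)) powr (1 / a)
      = real n powr (1 - 1 / a) * d n powr (- 1 / a)"
    using assms(2) eventually_gt_at_top[of 0]
  proof eventually_elim
    case (elim n)
    have "inverse (d n / real n powr (a - 1)) powr (1 / a)
        = (real n powr (a - 1)) powr (1 / a) / d n powr (1 / a)"
      using elim by (simp add: powr_divide)
    moreover have "(real n powr (a - 1)) powr (1 / a) = real n powr (1 - 1 / a)"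
      using assms(1) by (simp add: powr_powr diff_divide_distrib)
    moreover have "d n powr (- 1 / a) = 1 / d n powr (1 / a)"
      by (metis minus_divide_left powr_minus_divide)
    ultimately show ?case by simp
  qed
  ultimately show ?thesis using filterlim_cong by fastforce
qed

lemma ceiling_root_bounds:
  fixes x c a :: real
  assumes "c > 0" "a > 0" "c \<le> x"
  defines "y \<equiv> (x / c) powr (1 / a)"
  shows "1 \<le> y" "y \<le> real (nat \<lceil>y\<rceil>)" "real (nat \<lceil>y\<rceil>) \<le> 2 * y"
    "x \<le> c * real (nat \<lceil>y\<rceil>) powr a"
proof -
  show "1 \<le> y" unfolding y_def using assms(1-3) by (simp add: ge_one_powr_ge_zero)
  then show "y \<le> real (nat \<lceil>y\<rceil>)" "real (nat \<lceil>y\<rceil>) \<le> 2 * y" by linarith+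
  have "x / c = y powr a" unfolding y_def using assms by (simp add: powr_powr)
  also have "\<dots> \<le> real (nat \<lceil>y\<rceil>) powr a"
    using \<open>1 \<le> y\<close> \<open>y \<le> real (nat \<lceil>y\<rceil>)\<close> assms(2) by (intro powr_mono2) auto
  finally show "x \<le> c * real (nat \<lceil>y\<rceil>) powr a"
    using assms(1) by (simp add: divide_le_eq mult.commute)
qed

lemma div_root_eq:
  fixes n \<delta> r c a :: real
  assumes "n > 0" "\<delta> > 0" "r > 0" "c > 0" "a > 0"
  shows "n / (\<delta> * n / r / c) powr (1 / a)
    = (r * c) powr (1 / a) * (n powr (1 - 1 / a) * \<delta> powr (- 1 / a))"
proof -
  have "(\<delta> * n / r / c) powr (1 / a) = \<delta> powr (1 / a) * n powr (1 / a) / (r * c) powr (1 / a)"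
    using assms by (simp add: powr_divide powr_mult)
  moreover have "n powr (1 - 1 / a) = n / n powr (1 / a)" using assms by (simp add: powr_diff)
  moreover have "\<delta> powr (- 1 / a) = 1 / \<delta> powr (1 / a)" using assms by (simp add: powr_minus_divide)
  ultimately show ?thesis using assms by (simp add: field_simps)
qed

lemma deg_class_of_card:
  assumes "n > 0" "\<delta> > 0" "r > 0" "x = \<delta> * real n / real r" "real m \<le> x" "card (fst G) = m"
  shows "deg_class r n \<delta> (1 - real m / x) G"
proof -
  have "x > 0" using assms(1-4) by simp
  have avg: "avg_deg r n G = real m / x * \<delta>"
    unfolding avg_deg_def assms(4,6) using assms(1-3) by (simp add: field_simps)
  have "real m / x \<le> 1" using assms(5) \<open>x > 0\<close> by simp
  then have "real m / x * \<delta> \<le> (2 - real m / x) * \<delta>"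
    using assms(2) by (intro mult_right_mono) auto
  then show ?thesis unfolding deg_class_def avg by simp
qed

lemma tester_query_lower_bound:
  fixes r n :: nat and A :: ralg and \<delta> c a :: real
  defines "x \<equiv> \<delta> * real n / real r"
  defines "k \<equiv> nat \<lceil>(x / c) powr (1 / a)\<rceil>"
  defines "Cls \<equiv> deg_class r n \<delta> (1 - real (choose_floor r x choose r) / x)"
  assumes r: "r \<ge> 2" and F: "rgraph_on r VF EF" "EF \<noteq> {}"
    and pos: "c > 0" "a > 0" "n > 0" "\<delta> > 0" and "c \<le> x"
    and VF: "card VF \<le> choose_floor r x"
    and ex_k: "c * real k powr a \<le> real (ex r VF EF k)"
    and large: "4 \<le> (real r * c) powr (1 / a) * (real n powr (1 - 1 / a) * \<delta> powr (- 1 / a))"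
    and tester: "is_tester r n VF EF Cls (1 / real (card VF choose r)) A"
    and bound: "query_bound r n Cls A q"
  shows "(real r * c) powr (1 / a) / 12 * real n powr (1 - 1 / a) * \<delta> powr (- 1 / a) \<le> real q"
proof -
  define y where "y = (x / c) powr (1 / a)"
  note y = ceiling_root_bounds[OF pos(1,2) \<open>c \<le> x\<close>, folded y_def k_def]
  have "0 \<le> x" using pos(1) \<open>c \<le> x\<close> by linarith
  then have below: "real (choose_floor r x choose r) \<le> x" using r by (intro choose_floor_le) auto
  then have "choose_floor r x choose r \<le> ex r VF EF k" using y(4) ex_k by linarith
  moreover have "Cls G" if "card (fst G) = choose_floor r x choose r" for G
    unfolding Cls_def using pos r below that by (intro deg_class_of_card) (auto simp: x_def)
  ultimately have blocks: "real (n div k) \<le> 3 * real q"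
    using tester_queries_ge_blocks[OF r F VF _ _ tester bound] by blast
  define P where "P = (real r * c) powr (1 / a) * (real n powr (1 - 1 / a) * \<delta> powr (- 1 / a))"
  have "real n / y = P"
    unfolding y_def x_def P_def using pos r by (intro div_root_eq) auto
  have "\<lfloor>real n / real k\<rfloor> = int (n div k)" by (rule floor_divide_of_nat_eq)
  then have "real n / real k - 1 \<le> real (n div k)"
    using real_of_int_floor_gt_diff_one[of "real n / real k"] by simp
  moreover have "real n / (2 * y) \<le> real n / real k" using y(1-3) by (intro divide_left_mono) auto
  moreover have "real n / (2 * y) = P / 2" using \<open>real n / y = P\<close> by simp
  moreover have "(real r * c) powr (1 / a) / 12 * real n powr (1 - 1 / a) * \<delta> powr (- 1 / a)
      = P / 12"
    unfolding P_def by simp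
  ultimately show ?thesis using blocks large unfolding P_def[symmetric] by linarith
qed

section \<open>Asymptotics\<close>

lemma edges_nonempty_if_ex_unbounded:
  assumes "finite VF" "c > 0" "a > 0"
    and ex: "\<forall>\<^sub>F n in sequentially. c * real n powr a \<le> real (ex r VF EF n)"
  shows "EF \<noteq> {}"
proof
  assume "EF = {}"
  obtain f where f: "bij_betw f VF {0..<card VF}" using ex_bij_betw_finite_nat[OF assms(1)] by blast
  have "ex r VF EF n = Max {}" if "card VF \<le> n" for n
    \<comment> \<open>every graph contains F, so ex is the junk value Max {}\<close>
  proof -
    have "contains_copy n E VF EF" for E
      using f that \<open>EF = {}\<close> unfolding contains_copy_def bij_betw_def by (intro exI[of _ f]) auto
    then show ?thesis unfolding ex_def F_free_def by simp
  qed
  then have "\<forall>\<^sub>F n in sequentially. ex r VF EF n = Max {}"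
    unfolding eventually_sequentially by blast
  moreover have "filterlim (\<lambda>n. c * real n powr a) at_top sequentially"
    using assms(2,3) by (intro filterlim_tendsto_pos_mult_at_top[OF tendsto_const]
        filterlim_compose[OF real_powr_at_top filterlim_real_sequentially])
  then have "\<forall>\<^sub>F n in sequentially. real (Max {} :: nat) + 1 \<le> c * real n powr a"
    by (simp add: filterlim_at_top)
  ultimately have "\<forall>\<^sub>F n in sequentially. False" using ex by eventually_elim simp
  then show False by simp
qed

lemma eventually_tester_query_lower_bound:
  fixes x d :: "nat \<Rightarrow> real" and c a :: real
  assumes r: "r \<ge> 2" and F: "rgraph_on r VF EF" "EF \<noteq> {}" and pos: "c > 0" "a > 0"
    and ex: "\<forall>\<^sub>F n in sequentially. c * real n powr a \<le> real (ex r VF EF n)"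
    and x: "\<And>n. x n = d n * real n / real r" "filterlim x at_top sequentially"
    and d: "\<forall>\<^sub>F n in sequentially. d n > 0" "d \<in> o(\<lambda>n. real n powr (a - 1))"
  shows "\<forall>\<^sub>F n in sequentially. \<forall>A q.
    is_tester r n VF EF (deg_class r n (d n) (1 - real (choose_floor r (x n) choose r) / x n))
      (1 / real (card VF choose r)) A \<and>
    query_bound r n (deg_class r n (d n) (1 - real (choose_floor r (x n) choose r) / x n)) A q \<longrightarrow>
    (real r * c) powr (1 / a) / 12 * real n powr (1 - 1 / a) * d n powr (- 1 / a) \<le> real q"
proof -
  define k where "k n = nat \<lceil>(x n / c) powr (1 / a)\<rceil>" for n
  have "filterlim (\<lambda>n. x n / c) at_top sequentially"
    using filterlim_at_top_mult_tendsto_pos[OF tendsto_const[of "inverse c"] _ x(2)] pos(1)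
    by (simp add: divide_inverse)
  then have "filterlim k at_top sequentially"
    unfolding k_def using pos(2)
    by (intro filterlim_nat_ceiling_at_top filterlim_compose[OF real_powr_at_top]) simp_all
  note ex_k = eventually_compose_filterlim[OF ex this]
  have "filterlim (\<lambda>n. choose_floor r (x n)) at_top sequentially"
    using filterlim_compose[OF filterlim_choose_floor_at_top x(2)] r by simp
  then have VF_le: "\<forall>\<^sub>F n in sequentially. card VF \<le> choose_floor r (x n)"
    unfolding filterlim_at_top by blast
  have x_ge: "\<forall>\<^sub>F n in sequentially. c \<le> x n" using x(2) unfolding filterlim_at_top by blast
  have "filterlim (\<lambda>n. (real r * c) powr (1 / a) * (real n powr (1 - 1 / a) * d n powr (- 1 / a)))
      at_top sequentially"
    using r pos(1) by (intro filterlim_tendsto_pos_mult_at_top[OF tendsto_const]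
        filterlim_root_ratio_at_top[OF pos(2) d]) simp_all
  then have large: "\<forall>\<^sub>F n in sequentially.
      4 \<le> (real r * c) powr (1 / a) * (real n powr (1 - 1 / a) * d n powr (- 1 / a))"
    unfolding filterlim_at_top by blast
  show ?thesis
    using eventually_gt_at_top[of 0] d(1) x_ge VF_le ex_k large
  proof eventually_elim
    case (elim n)
    show ?case
      using tester_query_lower_bound[of r VF EF c a n "d n", folded x(1), folded k_def]
        r F pos elim by blast
  qed
qed

theorem proposition4p1:
  fixes r :: nat and VF :: "nat set" and EF :: "nat set set"
    and c a :: real and d :: "nat \<Rightarrow> real"
  assumes "r \<ge> 2"
    and "rgraph_on r VF EF"
    and "c > 0" and "a > 0"
    and "\<forall>\<^sub>F n in sequentially. c * real n powr a \<le> real (ex r VF EF n)"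
    and "\<exists>c'>0. \<forall>\<^sub>F n in sequentially. d n \<ge> c'"
    and "d \<in> o(\<lambda>n. real n powr (a - 1))"
  shows "\<exists>\<epsilon>>0. \<exists>C>0. \<exists>\<eta>::nat \<Rightarrow> real. \<eta> \<longlonglongrightarrow> 0 \<and>
           (\<forall>\<^sub>F n in sequentially. \<forall>A q.
              is_tester r n VF EF (deg_class r n (d n) (\<eta> n)) \<epsilon> A \<and>
              query_bound r n (deg_class r n (d n) (\<eta> n)) A q \<longrightarrow>
              C * real n powr (1 - 1 / a) * d n powr (- 1 / a) \<le> real q)"
proof -
  obtain c' where "c' > 0" and d_ge: "\<forall>\<^sub>F n in sequentially. c' \<le> d n" using assms(6) by blast
  have d_pos: "\<forall>\<^sub>F n in sequentially. d n > 0"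
    using d_ge by eventually_elim (use \<open>c' > 0\<close> in linarith)
  have F: "rgraph_on r VF EF" "EF \<noteq> {}"
    using assms(2) edges_nonempty_if_ex_unbounded[OF _ assms(3-5)] by (auto simp: rgraph_on_def)
  define x where "x n = d n * real n / real r" for n
  define \<eta> where "\<eta> n = 1 - real (choose_floor r (x n) choose r) / x n" for n
  have x_top: "filterlim x at_top sequentially"
    unfolding x_def using assms(1) \<open>c' > 0\<close> d_ge by (intro filterlim_mult_real_at_top) auto
  have "\<eta> \<longlonglongrightarrow> 0"
    using tendsto_diff[OF tendsto_const[of 1]
        filterlim_compose[OF choose_floor_ratio_tendsto x_top]] assms(1)
    unfolding \<eta>_def by simp
  moreover have "(real r * c) powr (1 / a) / 12 > 0" "1 / real (card VF choose r) > 0"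
    using assms(1,3) rank_le_card_vertices[OF F] by simp_all
  moreover note eventually_tester_query_lower_bound[OF assms(1) F assms(3-5) x_def x_top d_pos
      assms(7), folded \<eta>_def]
  ultimately show ?thesis by blast
qed

end
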